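(* Let $T\in\mathbb{T}$ have a positive weight on each edge, and let $A$ be its adjacency matrix. Then there exists a signature matrix $S$ such that $SA^{\#}S$ is a nonnegative matrix.
   Context: $\mathbb{T}$ is the class of simple undirected weighted trees $T$ such that (i) $T$ has at least one non-pendant vertex, and (ii) every non-pendant vertex of $T$ is adjacent to at least one pendant vertex (a vertex of degree one). The adjacency matrix $A$ has $(i,j)$ entry equal to the weight of edge $v_iv_j$, or $0$ if no edge; $A^{\#}$ is its group inverse (unique $X$ with $AXA=A$, $XAX=X$, $AX=XA$). A signature matrix is a diagonal matrix with diagonal entries in $\{1,-1\}$. *)

theory Defs
  imports "HOL-Analysis.Analysis"
begin

text \<open>A weighted simple undirected graph on the finite vertex type 'n is given by its
  (real) adjacency matrix A: vertices i, j are adjacent iff A$i$j \<noteq> 0, the weight of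
  the edge being A$i$j.\<close>

definition adj :: "real^'n^'n \<Rightarrow> 'n \<Rightarrow> 'n \<Rightarrow> bool" where
  "adj A i j \<longleftrightarrow> A $ i $ j \<noteq> 0"

definition weighted_simple_graph :: "real^'n^'n \<Rightarrow> bool" where
  "weighted_simple_graph A \<longleftrightarrow> (\<forall>i j. A $ i $ j = A $ j $ i) \<and> (\<forall>i. A $ i $ i = 0)"

definition graph_connected :: "real^'n^'n \<Rightarrow> bool" where
  "graph_connected A \<longleftrightarrow> (\<forall>i j. (adj A)\<^sup>*\<^sup>* i j)"

definition is_cycle :: "real^'n^'n \<Rightarrow> 'n list \<Rightarrow> bool" where
  "is_cycle A vs \<longleftrightarrow> length vs \<ge> 3 \<and> distinct vs \<and>
     (\<forall>k. Suc k < length vs \<longrightarrow> adj A (vs ! k) (vs ! Suc k)) \<and>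
     adj A (last vs) (hd vs)"

definition is_tree :: "real^'n^'n \<Rightarrow> bool" where
  "is_tree A \<longleftrightarrow> weighted_simple_graph A \<and> graph_connected A \<and> (\<nexists>vs. is_cycle A vs)"

definition degree :: "real^'n^'n \<Rightarrow> 'n \<Rightarrow> nat" where
  "degree A i = card {j. adj A i j}"

definition pendant :: "real^'n^'n \<Rightarrow> 'n \<Rightarrow> bool" where
  "pendant A i \<longleftrightarrow> degree A i = 1"

definition class_T :: "real^'n^'n \<Rightarrow> bool" where
  "class_T A \<longleftrightarrow> is_tree A \<and> (\<exists>i. \<not> pendant A i) \<and>
     (\<forall>i. \<not> pendant A i \<longrightarrow> (\<exists>j. adj A i j \<and> pendant A j))"

definition is_group_inverse :: "real^'n^'n \<Rightarrow> real^'n^'n \<Rightarrow> bool" where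
  "is_group_inverse A X \<longleftrightarrow> A ** X ** A = A \<and> X ** A ** X = X \<and> A ** X = X ** A"

definition group_inverse :: "real^'n^'n \<Rightarrow> real^'n^'n" where
  "group_inverse A = (THE X. is_group_inverse A X)"

definition signature_matrix :: "real^'n^'n \<Rightarrow> bool" where
  "signature_matrix S \<longleftrightarrow> (\<forall>i j. i \<noteq> j \<longrightarrow> S $ i $ j = 0) \<and> (\<forall>i. S $ i $ i = 1 \<or> S $ i $ i = -1)"

definition nonneg_matrix :: "real^'n^'n \<Rightarrow> bool" where
  "nonneg_matrix M \<longleftrightarrow> (\<forall>i j. M $ i $ j \<ge> 0)"

end

theory Submission
  imports Defs
begin

text \<open>Let \<open>L\<close> be the diagonal projection onto the pendant vertices. Two pendant vertices are
  never adjacent, so \<open>LAL = 0\<close>; a pendant vertex has a unique neighbour, so \<open>ALA\<close> is diagonal,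
  and its diagonal entry at a vertex is the sum of the squared weights of the pendant edges there,
  positive exactly at the non-pendant vertices. Let \<open>D\<close> invert \<open>ALA\<close> on the non-pendant
  vertices and vanish on the pendant ones, and put \<open>P = LAD\<close>, \<open>Q = DAL\<close>. Then
  \<open>X = P + Q - PAQ\<close> satisfies \<open>AX = XA = I - L + PAL\<close>, and \<open>AXA = A\<close>, \<open>XAX = X\<close> follow,
  so \<open>X\<close> is the group inverse.

  A tree is bipartite. Let \<open>S\<close> carry the sign of the colour class, flipped at the pendant
  vertices. Then the two ends of a pendant edge get equal signs and the two ends of any other edge
  opposite signs, so conjugation by \<open>S\<close> fixes \<open>P\<close> and \<open>Q\<close> and negates \<open>DAD\<close>. As
  \<open>PAQ = LA(DAD)AL\<close>, this gives \<open>SXS = P + Q + PAQ\<close>, which is nonnegative when the weights are.\<close>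

section \<open>Walks and bipartiteness of trees\<close>

definition walk :: "('a \<Rightarrow> 'a \<Rightarrow> bool) \<Rightarrow> (nat \<Rightarrow> 'a) \<Rightarrow> nat \<Rightarrow> bool" where
  "walk R f k \<longleftrightarrow> (\<forall>i<k. R (f i) (f (Suc i)))"

lemma walk_snoc:
  assumes "walk R f k" and "R (f k) z"
  shows "walk R (\<lambda>i. if i \<le> k then f i else z) (Suc k)"
  using assms by (auto simp: walk_def less_Suc_eq)

lemma rtranclp_imp_walk:
  assumes "R\<^sup>*\<^sup>* x y"
  obtains f k where "walk R f k" and "f 0 = x" and "f k = y"
  using assms
proof (induction arbitrary: thesis rule: rtranclp_induct)
  case base
  show ?case by (rule base[of "\<lambda>_. x" 0]) (simp_all add: walk_def)
next
  case (step y z)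
  obtain f k where f: "walk R f k" "f 0 = x" "f k = y"
    using step.IH by blast
  with step.hyps(2) have "walk R (\<lambda>i. if i \<le> k then f i else z) (Suc k)"
    by (intro walk_snoc) auto
  then show ?case
    by (rule step.prems) (use f in auto)
qed

lemma walk_append:
  assumes "walk R f k" and "walk R g m" and "g 0 = f k"
  shows "walk R (\<lambda>i. if i \<le> k then f i else g (i - k)) (k + m)"
  unfolding walk_def
proof (intro allI impI)
  fix i assume i: "i < k + m"
  show "R (if i \<le> k then f i else g (i - k)) (if Suc i \<le> k then f (Suc i) else g (Suc i - k))"
  proof (cases "Suc i \<le> k")
    case True
    then show ?thesis using assms(1) by (simp add: walk_def)
  next
    case False
    with i assms(2) have "R (g (i - k)) (g (Suc (i - k)))"
      by (simp add: walk_def)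
    with False assms(3) show ?thesis
      by (cases "i = k") (auto simp: Suc_diff_le)
  qed
qed

lemma walk_rev:
  assumes "symp R" and "walk R f k"
  shows "walk R (\<lambda>i. f (k - i)) k"
  unfolding walk_def
proof (intro allI impI)
  fix i assume "i < k"
  then have "R (f (k - Suc i)) (f (Suc (k - Suc i)))"
    using assms(2) by (simp add: walk_def)
  with \<open>i < k\<close> show "R (f (k - i)) (f (k - Suc i))"
    using assms(1) by (simp add: Suc_diff_Suc sympD)
qed

lemma walk_segment:
  assumes "walk R f k" and "a \<le> b" and "b \<le> k"
  shows "walk R (\<lambda>i. f (i + a)) (b - a)"
  using assms by (simp add: walk_def)

lemma distinct_closed_walk_is_cycle:
  assumes "walk (adj A) f k" and "f k = f 0" and "3 \<le> k" and "distinct (map f [0..<k])"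
  shows "is_cycle A (map f [0..<k])"
  unfolding is_cycle_def
proof (intro conjI allI impI)
  have "adj A (f (k - 1)) (f k)"
    using assms(1,3) by (auto simp: walk_def dest: spec[of _ "k - 1"])
  then show "adj A (last (map f [0..<k])) (hd (map f [0..<k]))"
    using assms(2,3) by (simp add: last_map hd_map)
qed (use assms in \<open>auto simp: walk_def\<close>)

lemma odd_closed_walk_imp_cycle:
  assumes irrefl: "\<And>x. \<not> adj A x x"
    and "walk (adj A) f k" and "f k = f 0" and "odd k"
  shows "\<exists>vs. is_cycle A vs"
  using assms(2-)
proof (induction k arbitrary: f rule: less_induct)
  case (less k)
  show ?case
  proof (cases "distinct (map f [0..<k])")
    case True
    have "k \<noteq> 1"
      using less.prems(1,2) irrefl by (auto simp: walk_def)
    with \<open>odd k\<close> have "3 \<le> k" by presburger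
    with True less.prems show ?thesis
      using distinct_closed_walk_is_cycle by blast
  next
    case False
    then obtain a b where ab: "a < b" "b < k" "f a = f b"
      by (auto simp: distinct_conv_nth) (metis linorder_neqE_nat)
    \<comment> \<open>Cutting the closed walk at the repeated vertex gives two shorter closed walks,
      and one of them has odd length.\<close>
    define loop where "loop = (\<lambda>i. f (i + a))"
    define rest where "rest = (\<lambda>i. if i \<le> a then f i else f (i - a + b))"
    have "walk (adj A) loop (b - a)"
      unfolding loop_def using walk_segment[OF less.prems(1)] ab by simp
    moreover have "loop (b - a) = loop 0"
      using ab by (simp add: loop_def)
    moreover have "walk (adj A) rest (a + (k - b))"
    proof -
      have "walk (adj A) f a" and "walk (adj A) (\<lambda>i. f (i + b)) (k - b)"
        using walk_segment[OF less.prems(1)] less.prems(1) ab by (simp_all add: walk_def)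
      from walk_append[OF this] ab show ?thesis
        by (simp add: rest_def)
    qed
    moreover have "rest (a + (k - b)) = rest 0"
      using ab less.prems(2) by (auto simp: rest_def)
    moreover have "odd (b - a) \<or> odd (a + (k - b))"
      using \<open>odd k\<close> ab by presburger
    moreover have "b - a < k" and "a + (k - b) < k"
      using ab by simp_all
    ultimately show ?thesis
      using less.IH by blast
  qed
qed

lemma weighted_simple_graph_adj_sym:
  "weighted_simple_graph A \<Longrightarrow> symp (adj A)"
  unfolding weighted_simple_graph_def adj_def symp_def by metis

lemma weighted_simple_graph_adj_irrefl:
  "weighted_simple_graph A \<Longrightarrow> \<not> adj A x x"
  unfolding weighted_simple_graph_def adj_def by blast

lemma tree_walks_same_parity:
  assumes "is_tree A"
    and "walk (adj A) f k" and "walk (adj A) g m" and "f 0 = g 0" and "f k = g m"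
  shows "even k \<longleftrightarrow> even m"
proof (rule ccontr)
  assume "\<not> (even k \<longleftrightarrow> even m)"
  then have "odd (k + m)" by simp
  have graph: "weighted_simple_graph A"
    using assms(1) by (simp add: is_tree_def)
  let ?h = "\<lambda>i. if i \<le> k then f i else g (k + m - i)"
  have "walk (adj A) (\<lambda>i. g (m - i)) m"
    using walk_rev[OF weighted_simple_graph_adj_sym[OF graph] assms(3)] .
  from walk_append[OF assms(2) this] assms(5)
  have "walk (adj A) ?h (k + m)"
    by (simp add: algebra_simps cong: if_cong)
  moreover have "?h (k + m) = ?h 0"
    using assms(4,5) by (cases "m = 0") auto
  ultimately have "\<exists>vs. is_cycle A vs"
    using odd_closed_walk_imp_cycle[OF weighted_simple_graph_adj_irrefl[OF graph]] \<open>odd (k + m)\<close>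
    by blast
  with assms(1) show False
    by (simp add: is_tree_def)
qed

lemma tree_two_colouring:
  fixes A :: "real^'n^'n"
  assumes "is_tree A"
  obtains c :: "'n \<Rightarrow> bool" where "\<And>u v. adj A u v \<Longrightarrow> c u \<noteq> c v"
proof -
  fix r :: 'n
  define c where "c v \<longleftrightarrow> (\<exists>f k. walk (adj A) f k \<and> f 0 = r \<and> f k = v \<and> even k)" for v
  have c_iff: "c v \<longleftrightarrow> even k" if "walk (adj A) f k" "f 0 = r" "f k = v" for f k v
    using that tree_walks_same_parity[OF assms that(1)] unfolding c_def by metis
  have "c u \<noteq> c v" if "adj A u v" for u v
  proof -
    have "(adj A)\<^sup>*\<^sup>* r u"
      using assms by (simp add: is_tree_def graph_connected_def)
    then obtain f k where f: "walk (adj A) f k" "f 0 = r" "f k = u"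
      by (rule rtranclp_imp_walk)
    with \<open>adj A u v\<close> have "walk (adj A) (\<lambda>i. if i \<le> k then f i else v) (Suc k)"
      by (intro walk_snoc) auto
    then have "c v \<longleftrightarrow> odd k"
      using c_iff[of _ "Suc k" v] f(2) by simp
    with c_iff[OF f] show ?thesis by simp
  qed
  then show ?thesis
    by (rule that)
qed

section \<open>Matrix algebra\<close>

lemma matrix_mult_nth: "(M ** N) $ i $ j = (\<Sum>k\<in>UNIV. M $ i $ k * N $ k $ j)"
  by (simp add: matrix_matrix_mult_def)

lemma matrix_add_rdistrib: "(B + C) ** A = B ** A + C ** A"
  by (simp add: matrix_matrix_mult_def vec_eq_iff sum.distrib algebra_simps)

lemma matrix_diff_ldistrib: "(A :: 'a::ring_1^'n^'m) ** (B - C) = A ** B - A ** C"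
  by (simp add: matrix_matrix_mult_def vec_eq_iff sum_subtractf algebra_simps)

lemma matrix_diff_rdistrib: "((B :: 'a::ring_1^'n^'m) - C) ** A = B ** A - C ** A"
  by (simp add: matrix_matrix_mult_def vec_eq_iff sum_subtractf algebra_simps)

lemma matrix_neg_left: "(- A :: 'a::ring_1^'n^'m) ** B = - (A ** B)"
  by (simp add: matrix_matrix_mult_def vec_eq_iff sum_negf)

lemma matrix_neg_right: "(A :: 'a::ring_1^'n^'m) ** (- B) = - (A ** B)"
  by (simp add: matrix_matrix_mult_def vec_eq_iff sum_negf)

lemma is_group_inverse_unique:
  assumes "is_group_inverse A X" and "is_group_inverse A Y"
  shows "X = Y"
proof -
  have x: "A ** X ** A = A" "X ** A ** X = X" "A ** X = X ** A"
    and y: "A ** Y ** A = A" "Y ** A ** Y = Y" "A ** Y = Y ** A"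
    using assms unfolding is_group_inverse_def by blast+
  have "X ** A = X ** A ** Y ** A"
    using y(1) by (metis matrix_mul_assoc)
  also have "\<dots> = A ** Y"
    using x(1,3) y(3) by (metis matrix_mul_assoc)
  finally have XA_AY: "X ** A = A ** Y" .
  have "X = X ** (A ** X)"
    using x(2) by (metis matrix_mul_assoc)
  also have "\<dots> = A ** Y ** Y"
    using x(3) XA_AY by (metis matrix_mul_assoc)
  also have "\<dots> = Y"
    using y(2,3) by (metis matrix_mul_assoc)
  finally show ?thesis .
qed

lemma group_inverse_eqI: "is_group_inverse A X \<Longrightarrow> group_inverse A = X"
  unfolding group_inverse_def using is_group_inverse_unique by blast

lemma is_group_inverse_projection_formula:
  fixes A L D :: "real^'n^'n"
  assumes LD: "L ** D = 0" and DL: "D ** L = 0" and LAL: "L ** A ** L = 0"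
    and DALA: "D ** A ** L ** A = mat 1 - L" and ALAD: "A ** L ** A ** D = mat 1 - L"
  defines "P \<equiv> L ** A ** D" and "Q \<equiv> D ** A ** L"
  shows "is_group_inverse A (P + Q - P ** A ** Q)"
proof -
  define X where "X = P + Q - P ** A ** Q"
  have "L ** (D ** A ** L ** A) = 0"
    using LD by (metis matrix_mul_assoc times0_left)
  then have LL: "L ** L = L"
    using DALA by (simp add: matrix_diff_ldistrib)
  have AP: "A ** P = mat 1 - L"
    using ALAD by (simp add: P_def matrix_mul_assoc)
  have QA: "Q ** A = mat 1 - L"
    using DALA by (simp add: Q_def)
  have LQ: "L ** Q = 0"
    using LD by (simp add: Q_def matrix_mul_assoc)
  have LP: "L ** P = P"
    using LL by (simp add: P_def matrix_mul_assoc)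
  have PAP: "P ** A ** P = P"
  proof -
    have "P ** A ** P = L ** A ** (D ** A ** L ** A) ** D"
      by (simp add: P_def matrix_mul_assoc)
    also have "\<dots> = P - L ** A ** L ** D"
      using DALA by (simp add: P_def matrix_diff_ldistrib matrix_diff_rdistrib)
    finally show ?thesis
      using LAL by simp
  qed
  have LX: "L ** X = P - P ** A ** Q"
    using LP LQ by (simp add: X_def matrix_add_ldistrib matrix_diff_ldistrib matrix_mul_assoc)
  have AX: "A ** X = mat 1 - L + L ** A ** Q"
  proof -
    have "A ** X = A ** P + A ** Q - A ** P ** A ** Q"
      by (simp add: X_def matrix_add_ldistrib matrix_diff_ldistrib matrix_mul_assoc)
    also have "\<dots> = mat 1 - L + L ** A ** Q"
      by (simp add: AP matrix_diff_rdistrib)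
    finally show ?thesis .
  qed
  have XA: "X ** A = mat 1 - L + P ** A ** L"
  proof -
    have "X ** A = P ** A + Q ** A - P ** A ** (Q ** A)"
      by (simp add: X_def matrix_add_rdistrib matrix_diff_rdistrib matrix_mul_assoc)
    also have "\<dots> = mat 1 - L + P ** A ** L"
      by (simp add: QA matrix_diff_ldistrib)
    finally show ?thesis .
  qed
  have "A ** X ** A = A"
  proof -
    have "A ** X ** A = A - L ** A + L ** A ** (Q ** A)"
      by (simp add: AX matrix_add_rdistrib matrix_diff_rdistrib matrix_mul_assoc)
    then show ?thesis
      using LAL by (simp add: QA matrix_diff_ldistrib)
  qed
  moreover have "X ** A ** X = X"
  proof -
    have "X ** A ** X = X - L ** X + P ** A ** (L ** X)"
      by (simp add: XA matrix_add_rdistrib matrix_diff_rdistrib matrix_mul_assoc)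
    also have "\<dots> = X - P + P ** A ** Q + (P ** A ** P - P ** A ** P ** A ** Q)"
      by (simp add: LX matrix_diff_ldistrib matrix_mul_assoc)
    finally show ?thesis
      by (simp add: PAP)
  qed
  moreover have "A ** X = X ** A"
    by (simp add: AX XA P_def Q_def matrix_mul_assoc)
  ultimately show ?thesis
    by (simp add: is_group_inverse_def X_def)
qed

definition diag_matrix :: "('n \<Rightarrow> 'a::zero) \<Rightarrow> 'a^'n^'n" where
  "diag_matrix f = (\<chi> i j. if i = j then f i else 0)"

lemma diag_matrix_mult_nth: "(diag_matrix f ** M) $ i $ j = f i * M $ i $ j"
  by (simp add: matrix_matrix_mult_def diag_matrix_def if_distrib if_distribR sum.delta cong: if_cong)

lemma mult_diag_matrix_nth: "(M ** diag_matrix f) $ i $ j = M $ i $ j * f j"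
  by (simp add: matrix_matrix_mult_def diag_matrix_def if_distrib if_distribR sum.delta' cong: if_cong)

lemma diag_matrix_conj_nth:
  "(diag_matrix f ** M ** diag_matrix g) $ i $ j = f i * M $ i $ j * g j"
  by (simp add: diag_matrix_mult_nth mult_diag_matrix_nth)

lemma diag_matrix_mult: "diag_matrix f ** diag_matrix g = diag_matrix (\<lambda>i. f i * g i)"
  by (simp add: vec_eq_iff diag_matrix_mult_nth) (simp add: diag_matrix_def)

lemma diag_matrix_diff:
  fixes f g :: "'n::finite \<Rightarrow> 'a::ab_group_add"
  shows "diag_matrix f - diag_matrix g = diag_matrix (\<lambda>i. f i - g i)"
  by (simp add: vec_eq_iff diag_matrix_def)

lemma diag_matrix_const: "diag_matrix (\<lambda>_. c) = mat c"
  by (simp add: vec_eq_iff diag_matrix_def mat_def)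

lemma diag_matrix_conj_eq_self:
  fixes M :: "'a::comm_ring_1^'n^'n"
  assumes "\<And>i j. M $ i $ j \<noteq> 0 \<Longrightarrow> f i * g j = 1"
  shows "diag_matrix f ** M ** diag_matrix g = M"
proof (simp add: vec_eq_iff diag_matrix_conj_nth, intro allI)
  fix i j
  have "f i * M $ i $ j * g j = (f i * g j) * M $ i $ j"
    by (simp add: ac_simps)
  with assms[of i j] show "f i * M $ i $ j * g j = M $ i $ j"
    by (cases "M $ i $ j = 0") simp_all
qed

lemma diag_matrix_conj_eq_uminus:
  fixes M :: "'a::comm_ring_1^'n^'n"
  assumes "\<And>i j. M $ i $ j \<noteq> 0 \<Longrightarrow> f i * g j = -1"
  shows "diag_matrix f ** M ** diag_matrix g = - M"
proof (simp add: vec_eq_iff diag_matrix_conj_nth, intro allI)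
  fix i j
  have "f i * M $ i $ j * g j = (f i * g j) * M $ i $ j"
    by (simp add: ac_simps)
  with assms[of i j] show "f i * M $ i $ j * g j = - M $ i $ j"
    by (cases "M $ i $ j = 0") simp_all
qed

lemma signature_conj_projection_formula:
  fixes S L A D :: "real^'n^'n"
  defines "P \<equiv> L ** A ** D" and "Q \<equiv> D ** A ** L"
  assumes SS: "S ** S = mat 1" and SD: "S ** D = D ** S"
    and SPS: "S ** P ** S = P" and SQS: "S ** Q ** S = Q"
    and SDADS: "S ** (D ** A ** D) ** S = - (D ** A ** D)"
  shows "S ** (P + Q - P ** A ** Q) ** S = P + Q + P ** A ** Q"
proof -
  have SS': "M ** S ** S = M" for M :: "real^'n^'n"
    using SS by (metis matrix_mul_assoc matrix_mul_rid)
  have "S ** (P ** A ** Q) ** S = (S ** P ** S) ** (S ** A ** S) ** (S ** Q ** S)"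
    by (simp add: matrix_mul_assoc SS')
  also have "\<dots> = P ** (S ** A ** S) ** Q"
    using SPS SQS by simp
  also have "\<dots> = L ** A ** (D ** S ** A ** S ** D) ** A ** L"
    unfolding P_def Q_def by (simp add: matrix_mul_assoc)
  also have "D ** S ** A ** S ** D = S ** (D ** A ** D) ** S"
    using SD by (metis matrix_mul_assoc)
  finally have "S ** (P ** A ** Q) ** S = - (P ** A ** Q)"
    unfolding SDADS P_def Q_def by (simp add: matrix_neg_left matrix_neg_right matrix_mul_assoc)
  then show ?thesis
    using SPS SQS by (simp add: matrix_add_ldistrib matrix_add_rdistrib
        matrix_diff_ldistrib matrix_diff_rdistrib)
qed

lemma nonneg_matrix_add: "nonneg_matrix M \<Longrightarrow> nonneg_matrix N \<Longrightarrow> nonneg_matrix (M + N)"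
  by (simp add: nonneg_matrix_def)

lemma nonneg_matrix_mult: "nonneg_matrix M \<Longrightarrow> nonneg_matrix N \<Longrightarrow> nonneg_matrix (M ** N)"
  by (simp add: nonneg_matrix_def matrix_matrix_mult_def sum_nonneg)

lemma nonneg_matrix_diag_matrix: "(\<And>i. 0 \<le> f i) \<Longrightarrow> nonneg_matrix (diag_matrix f)"
  by (simp add: nonneg_matrix_def diag_matrix_def)

section \<open>Trees in the class \<open>\<T>\<close>\<close>

lemma pendant_unique_neighbour:
  assumes "pendant A u" and "adj A u v" and "adj A u w"
  shows "v = w"
proof -
  obtain x where "{j. adj A u j} = {x}"
    using assms(1) unfolding pendant_def degree_def by (rule card_1_singletonE)
  with assms(2,3) show ?thesis
    by (metis mem_Collect_eq singletonD)
qed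

lemma tree_pendants_not_adj:
  assumes "is_tree A" and "\<not> pendant A v" and "pendant A u" and "pendant A w"
  shows "\<not> adj A u w"
proof
  assume "adj A u w"
  then have "adj A w u"
    using assms(1) weighted_simple_graph_adj_sym by (auto simp: is_tree_def dest: sympD)
  \<comment> \<open>Two adjacent pendant vertices form a whole component, which cannot contain \<open>v\<close>.\<close>
  have "x \<in> {u, w}" if "(adj A)\<^sup>*\<^sup>* u x" for x
    using that
  proof (induction rule: rtranclp_induct)
    case (step y z)
    then show ?case
      using pendant_unique_neighbour assms(3,4) \<open>adj A u w\<close> \<open>adj A w u\<close> by blast
  qed simp
  moreover have "(adj A)\<^sup>*\<^sup>* u v"
    using assms(1) by (simp add: is_tree_def graph_connected_def)
  ultimately show False
    using assms(2-4) by blast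
qed

definition pendant_projection :: "real^'n^'n \<Rightarrow> real^'n^'n" where
  "pendant_projection A = diag_matrix (\<lambda>i. if pendant A i then 1 else 0)"

definition pendant_weight :: "real^'n^'n \<Rightarrow> 'n \<Rightarrow> real" where
  "pendant_weight A v = (A ** pendant_projection A ** A) $ v $ v"

definition inv_pendant_weight :: "real^'n^'n \<Rightarrow> real^'n^'n" where
  "inv_pendant_weight A = diag_matrix (\<lambda>v. if pendant A v then 0 else 1 / pendant_weight A v)"

lemma pendant_projection_sandwich_nth:
  "(A ** pendant_projection A ** A) $ v $ w =
     (\<Sum>u | pendant A u. A $ v $ u * A $ u $ w)"
proof -
  have "(A ** pendant_projection A ** A) $ v $ w =
      (\<Sum>u\<in>UNIV. if pendant A u then A $ v $ u * A $ u $ w else 0)"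
    by (subst matrix_mult_nth) (auto simp: mult_diag_matrix_nth pendant_projection_def intro: sum.cong)
  then show ?thesis
    by (simp add: sum.inter_filter[symmetric])
qed

lemma pendant_projection_sandwich_diagonal:
  assumes "weighted_simple_graph A"
  shows "A ** pendant_projection A ** A = diag_matrix (pendant_weight A)"
proof -
  have "(A ** pendant_projection A ** A) $ v $ w = 0" if "v \<noteq> w" for v w
    unfolding pendant_projection_sandwich_nth
  proof (rule sum.neutral, intro ballI)
    fix u assume "u \<in> {u. pendant A u}"
    then have "\<not> (adj A u v \<and> adj A u w)"
      using pendant_unique_neighbour \<open>v \<noteq> w\<close> by blast
    then show "A $ v $ u * A $ u $ w = 0"
      using assms by (auto simp: adj_def weighted_simple_graph_def)
  qed
  then show ?thesis
    by (simp add: vec_eq_iff diag_matrix_def pendant_weight_def)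
qed

lemma pendant_weight_pos:
  assumes "class_T A" and "\<forall>i j. adj A i j \<longrightarrow> 0 < A $ i $ j" and "\<not> pendant A v"
  shows "0 < pendant_weight A v"
proof -
  obtain u where u: "adj A v u" "pendant A u"
    using assms(1,3) by (auto simp: class_T_def)
  then have "adj A u v"
    using assms(1) weighted_simple_graph_adj_sym by (auto simp: class_T_def is_tree_def dest: sympD)
  have nonneg: "0 \<le> A $ i $ j" for i j
    using assms(2) by (metis adj_def less_eq_real_def)
  have "0 < A $ v $ u * A $ u $ v"
    using u(1) \<open>adj A u v\<close> assms(2) by simp
  then show ?thesis
    unfolding pendant_weight_def pendant_projection_sandwich_nth
    using u(2) nonneg by (intro sum_pos2[of _ u]) auto
qed

lemma class_T_is_group_inverse:
  fixes A :: "real^'n^'n"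
  assumes T: "class_T A" and pos: "\<forall>i j. adj A i j \<longrightarrow> 0 < A $ i $ j"
  defines "L \<equiv> pendant_projection A" and "D \<equiv> inv_pendant_weight A"
  shows "is_group_inverse A (L ** A ** D + D ** A ** L - L ** A ** D ** A ** (D ** A ** L))"
proof (rule is_group_inverse_projection_formula)
  show "L ** D = 0" and "D ** L = 0"
    by (simp_all add: L_def D_def pendant_projection_def inv_pendant_weight_def diag_matrix_mult
        diag_matrix_const if_distrib if_distribR cong: if_cong)
  have tree: "is_tree A" and "\<exists>v. \<not> pendant A v"
    using T by (simp_all add: class_T_def)
  then show "L ** A ** L = 0"
    using tree_pendants_not_adj
    by (auto simp: vec_eq_iff L_def pendant_projection_def diag_matrix_conj_nth adj_def)
  have ALA: "A ** L ** A = diag_matrix (pendant_weight A)"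
    using tree by (simp add: L_def is_tree_def pendant_projection_sandwich_diagonal)
  have "pendant_weight A v \<noteq> 0" if "\<not> pendant A v" for v
    using pendant_weight_pos[OF T pos that] by simp
  then have "D ** diag_matrix (pendant_weight A) = mat 1 - L"
    and "diag_matrix (pendant_weight A) ** D = mat 1 - L"
    by (simp_all add: D_def L_def inv_pendant_weight_def pendant_projection_def diag_matrix_mult
        diag_matrix_const[of 1, symmetric] diag_matrix_diff if_distrib if_distribR cong: if_cong)
  with ALA show "D ** A ** L ** A = mat 1 - L" and "A ** L ** A ** D = mat 1 - L"
    by (metis matrix_mul_assoc)+
qed

lemma tree_signature:
  fixes A :: "real^'n^'n"
  assumes "is_tree A"
  obtains \<sigma> :: "'n \<Rightarrow> real" where "\<And>i. \<sigma> i = 1 \<or> \<sigma> i = -1"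
    and "\<And>i j. adj A i j \<Longrightarrow> pendant A i \<noteq> pendant A j \<Longrightarrow> \<sigma> i * \<sigma> j = 1"
    and "\<And>i j. adj A i j \<Longrightarrow> \<not> pendant A i \<Longrightarrow> \<not> pendant A j \<Longrightarrow> \<sigma> i * \<sigma> j = -1"
proof -
  obtain c :: "'n \<Rightarrow> bool" where c: "\<And>u v. adj A u v \<Longrightarrow> c u \<noteq> c v"
    using tree_two_colouring[OF assms] by blast
  show ?thesis
    by (rule that[of "\<lambda>i. (if pendant A i then -1 else 1) * (if c i then 1 else -1)"])
      (auto dest!: c)
qed

lemma class_T_signature_conj:
  fixes A :: "real^'n^'n"
  assumes T: "class_T A"
  defines "L \<equiv> pendant_projection A" and "D \<equiv> inv_pendant_weight A"
  defines "P \<equiv> L ** A ** D" and "Q \<equiv> D ** A ** L"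
  obtains S where "signature_matrix S" and "S ** (P + Q - P ** A ** Q) ** S = P + Q + P ** A ** Q"
proof -
  have tree: "is_tree A"
    using T by (simp add: class_T_def)
  obtain \<sigma> :: "'n \<Rightarrow> real" where \<sigma>: "\<And>i. \<sigma> i = 1 \<or> \<sigma> i = -1"
    and flip: "\<And>i j. adj A i j \<Longrightarrow> pendant A i \<noteq> pendant A j \<Longrightarrow> \<sigma> i * \<sigma> j = 1"
    and keep: "\<And>i j. adj A i j \<Longrightarrow> \<not> pendant A i \<Longrightarrow> \<not> pendant A j \<Longrightarrow> \<sigma> i * \<sigma> j = -1"
    using tree_signature[OF tree] by blast
  define S where "S = diag_matrix \<sigma>"
  have "signature_matrix S"
    using \<sigma> by (simp add: S_def signature_matrix_def diag_matrix_def)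
  moreover have "S ** (P + Q - P ** A ** Q) ** S = P + Q + P ** A ** Q"
    unfolding P_def Q_def
  proof (rule signature_conj_projection_formula)
    show "S ** S = mat 1"
      using \<sigma> by (simp add: S_def diag_matrix_mult diag_matrix_const[of 1, symmetric])
        (metis mult_1_right mult_minus1_right minus_minus)
    show "S ** D = D ** S"
      by (simp add: S_def D_def inv_pendant_weight_def diag_matrix_mult mult.commute)
    show "S ** (L ** A ** D) ** S = L ** A ** D" and "S ** (D ** A ** L) ** S = D ** A ** L"
      and "S ** (D ** A ** D) ** S = - (D ** A ** D)"
      unfolding S_def L_def D_def
      by (auto intro!: diag_matrix_conj_eq_self diag_matrix_conj_eq_uminus flip keep
          simp: diag_matrix_conj_nth pendant_projection_def inv_pendant_weight_def adj_def
          split: if_splits)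
  qed
  ultimately show ?thesis
    by (rule that)
qed

theorem theorem3p8:
  fixes A :: "real^'n^'n"
  assumes "class_T A"
    and "\<forall>i j. adj A i j \<longrightarrow> A $ i $ j > 0"
  shows "(\<exists>X. is_group_inverse A X) \<and>
         (\<exists>S. signature_matrix S \<and> nonneg_matrix (S ** group_inverse A ** S))"
proof -
  define L D where "L = pendant_projection A" and "D = inv_pendant_weight A"
  define P Q where "P = L ** A ** D" and "Q = D ** A ** L"
  have inverse: "is_group_inverse A (P + Q - P ** A ** Q)"
    using class_T_is_group_inverse[OF assms] by (simp add: L_def D_def P_def Q_def)
  obtain S where S: "signature_matrix S" "S ** (P + Q - P ** A ** Q) ** S = P + Q + P ** A ** Q"
    using class_T_signature_conj[OF assms(1)] by (auto simp: L_def D_def P_def Q_def)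
  have "nonneg_matrix A"
    using assms(2) by (auto simp: nonneg_matrix_def adj_def less_eq_real_def)
  moreover have "nonneg_matrix L" and "nonneg_matrix D"
    using pendant_weight_pos[OF assms] unfolding L_def D_def pendant_projection_def inv_pendant_weight_def
    by (auto intro!: nonneg_matrix_diag_matrix simp: less_imp_le)
  ultimately have "nonneg_matrix (P + Q + P ** A ** Q)"
    by (simp add: P_def Q_def nonneg_matrix_add nonneg_matrix_mult)
  with inverse S show ?thesis
    using group_inverse_eqI by metis
qed

end
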